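(* Let $G=(V,E)$ be a finite undirected graph with $V=\{1,\dots,n\}$, and let $A,B,C\subseteq V$ be nonempty pairwise disjoint sets with $V=A\cup B\cup C$, such that $C$ separates $A$ from $B$ in $G$ and $C$ is complete in $G$. Let $N$ be a symmetric positive definite $n\times n$ real matrix and $M=N_G$. Then $M$ is positive definite if and only if all of the following hold: (1) $M_{A\cup C}=\begin{pmatrix} M_{AA} & M_{AC}\\ M_{CA} & M_{CC}\end{pmatrix}$ is positive definite; (2) $M_{B\cup C}=\begin{pmatrix} M_{CC} & M_{CB}\\ M_{BC} & M_{BB}\end{pmatrix}$ is positive definite; (3) $S_1+S_2-M_{CC}$ is positive definite, where $S_1=M_{CC}-M_{CA}M_{AA}^{-1}M_{AC}$ and $S_2=M_{CC}-M_{CB}M_{BB}^{-1}M_{BC}$. Moreover, the same equivalence holds when conditions (1) and (2) are replaced by (1') $M_{AA}$ is positive definite and (2') $M_{BB}$ is positive definite.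
   Context: For a symmetric $n\times n$ real matrix $N=(n_{ij})$, $N_G$ is defined by $(N_G)_{ij}=n_{ij}$ if $i=j$ or $(i,j)\in E$, and $0$ otherwise. For index sets $X,Y\subseteq V$, $M_{XY}$ denotes the submatrix of $M$ with rows indexed by $X$ and columns indexed by $Y$. $C$ separates $A$ from $B$ means every path in $G$ from a vertex of $A$ to a vertex of $B$ contains a vertex of $C$; $C$ complete means every two distinct vertices of $C$ are adjacent. *)

theory Defs
  imports "Jordan_Normal_Form.Gauss_Jordan_Elimination" "Jordan_Normal_Form.DL_Submatrix"
begin

text \<open>Graph on vertex set V = {0..<n} given by an edge relation E (pairs of vertices).\<close>

definition graph_walk :: "(nat \<times> nat) set \<Rightarrow> nat list \<Rightarrow> bool" where
  "graph_walk E xs \<longleftrightarrow> xs \<noteq> [] \<and> (\<forall>i. Suc i < length xs \<longrightarrow> (xs ! i, xs ! Suc i) \<in> E)"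

definition separates :: "(nat \<times> nat) set \<Rightarrow> nat set \<Rightarrow> nat set \<Rightarrow> nat set \<Rightarrow> bool" where
  "separates E C A B \<longleftrightarrow>
     (\<forall>xs. graph_walk E xs \<and> distinct xs \<and> hd xs \<in> A \<and> last xs \<in> B \<longrightarrow> set xs \<inter> C \<noteq> {})"

definition complete_in :: "(nat \<times> nat) set \<Rightarrow> nat set \<Rightarrow> bool" where
  "complete_in E C \<longleftrightarrow> (\<forall>i\<in>C. \<forall>j\<in>C. i \<noteq> j \<longrightarrow> (i, j) \<in> E)"

definition restrict_graph :: "(nat \<times> nat) set \<Rightarrow> real mat \<Rightarrow> real mat" where
  "restrict_graph E N = mat (dim_row N) (dim_col N)
     (\<lambda>(i,j). if i = j \<or> (i, j) \<in> E then N $$ (i,j) else 0)"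

definition pos_def :: "real mat \<Rightarrow> bool" where
  "pos_def A \<longleftrightarrow> A \<in> carrier_mat (dim_row A) (dim_row A) \<and> transpose_mat A = A \<and>
     (\<forall>v \<in> carrier_vec (dim_row A). v \<noteq> 0\<^sub>v (dim_row A) \<longrightarrow> v \<bullet> (A *\<^sub>v v) > 0)"

text \<open>Matrix inverse (meaningful when the matrix is invertible).\<close>
definition mat_inv :: "real mat \<Rightarrow> real mat" where
  "mat_inv A = the (mat_inverse A)"

text \<open>Submatrix M_{XY}: rows indexed by X, columns by Y (in increasing order).\<close>
abbreviation sub :: "real mat \<Rightarrow> nat set \<Rightarrow> nat set \<Rightarrow> real mat" where
  "sub M X Y \<equiv> submatrix M X Y"

end

theory Submission
  imports Defs "Jordan_Normal_Form.Determinant"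
begin

text \<open>
  Since \<open>C\<close> separates \<open>A\<close> from \<open>B\<close>, the block \<open>M\<^sub>A\<^sub>B\<close> of \<open>M = N\<^sub>G\<close> vanishes, so for
  \<open>v = (x\<^sub>A, x\<^sub>B, x\<^sub>C)\<close> the quadratic form of \<open>M\<close> is
  \<open>x\<^sub>A\<^sup>T M\<^sub>A\<^sub>A x\<^sub>A + x\<^sub>B\<^sup>T M\<^sub>B\<^sub>B x\<^sub>B + x\<^sub>C\<^sup>T M\<^sub>C\<^sub>C x\<^sub>C + 2 x\<^sub>A\<^sup>T M\<^sub>A\<^sub>C x\<^sub>C + 2 x\<^sub>B\<^sup>T M\<^sub>B\<^sub>C x\<^sub>C\<close>.
  When \<open>M\<^sub>A\<^sub>A\<close> and \<open>M\<^sub>B\<^sub>B\<close> are positive definite, completing the square in \<open>x\<^sub>A\<close> and in \<open>x\<^sub>B\<close>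
  writes it as the sum of the forms of \<open>M\<^sub>A\<^sub>A\<close> at \<open>x\<^sub>A + M\<^sub>A\<^sub>A\<^sup>-\<^sup>1 M\<^sub>A\<^sub>C x\<^sub>C\<close>, of \<open>M\<^sub>B\<^sub>B\<close> at
  \<open>x\<^sub>B + M\<^sub>B\<^sub>B\<^sup>-\<^sup>1 M\<^sub>B\<^sub>C x\<^sub>C\<close>, and of \<open>S\<^sub>1 + S\<^sub>2 - M\<^sub>C\<^sub>C\<close> at \<open>x\<^sub>C\<close>; this gives the second
  characterisation. The first follows because \<open>M\<^sub>A\<^sub>A\<close>, \<open>M\<^sub>B\<^sub>B\<close> are diagonal blocks of the
  matrices in (1), (2), which in turn are principal subforms of \<open>M\<close>.
\<close>

section \<open>Selector matrices\<close>

lemma pick_eq_iff: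
  assumes "finite X" "k < card X"
  shows "pick X k = i \<longleftrightarrow> i \<in> X \<and> k = card {a \<in> X. a < i}"
  using assms pick_in_set[of k X] card_pick[of k X] pick_card_in_set[of i X] by auto

lemma sum_indicator_mult:
  "(\<Sum>i = 0..<n. (if i = p then 1 else 0) * f i) = (if p < (n::nat) then f p else (0::real))"
  "(\<Sum>i = 0..<n. f i * (if i = p then 1 else 0)) = (if p < (n::nat) then f p else (0::real))"
  by (simp_all add: if_distrib[of "\<lambda>x. x * _"] if_distrib[of "\<lambda>x. _ * x"] cong: if_cong)

definition selector_mat :: "nat \<Rightarrow> nat set \<Rightarrow> real mat" where
  "selector_mat n X = mat n (card X) (\<lambda>(i, k). if i = pick X k then 1 else 0)"

lemma selector_mat_carrier [simp]: "selector_mat n X \<in> carrier_mat n (card X)"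
  unfolding selector_mat_def by simp

lemma dim_selector_mat [simp]:
  "dim_row (selector_mat n X) = n" "dim_col (selector_mat n X) = card X"
  unfolding selector_mat_def by simp_all

lemma selector_mult_vec_carrier [simp]:
  "selector_mat n X *\<^sub>v x \<in> carrier_vec n"
  "transpose_mat (selector_mat n X) *\<^sub>v v \<in> carrier_vec (card X)"
  by (rule carrier_vecI, simp)+

lemma transpose_selector_mult_selector:
  assumes "X \<subseteq> {0..<n}"
  shows "transpose_mat (selector_mat n X) * selector_mat n Y =
    mat (card X) (card Y) (\<lambda>(k, l). if pick X k = pick Y l then 1 else 0)"
proof -
  have "finite X" using assms finite_subset by blast
  then show ?thesis
    using assms pick_in_set[OF disjI1, of _ X]
    by (intro eq_matI) (fastforce simp: selector_mat_def scalar_prod_def sum_indicator_mult)+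
qed

lemma transpose_selector_mult_self:
  assumes "X \<subseteq> {0..<n}"
  shows "transpose_mat (selector_mat n X) * selector_mat n X = 1\<^sub>m (card X)"
proof -
  have "finite X" using assms finite_subset by blast
  then show ?thesis
    unfolding transpose_selector_mult_selector[OF assms]
    using pick_eq_iff[of X] by (intro eq_matI) auto
qed

lemma transpose_selector_mult_disjoint:
  assumes "X \<subseteq> {0..<n}" "X \<inter> Y = {}"
  shows "transpose_mat (selector_mat n X) * selector_mat n Y = 0\<^sub>m (card X) (card Y)"
  unfolding transpose_selector_mult_selector[OF assms(1)]
  using assms pick_in_set[OF disjI1, of _ X] pick_in_set[OF disjI1, of _ Y]
  by (intro eq_matI) (force simp: disjoint_iff)+

lemma submatrix_eq_selector_congruence:
  assumes "M \<in> carrier_mat n n" "X \<subseteq> {0..<n}" "Y \<subseteq> {0..<n}"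
  shows "submatrix M X Y = transpose_mat (selector_mat n X) * M * selector_mat n Y"
proof -
  have "{i. i < n \<and> i \<in> X} = X" "{i. i < n \<and> i \<in> Y} = Y" using assms by auto
  moreover have "finite X" "finite Y" using assms finite_subset by blast+
  ultimately show ?thesis
    using assms pick_in_set[OF disjI1, of _ X] pick_in_set[OF disjI1, of _ Y]
    by (intro eq_matI)
      (auto simp: submatrix_def selector_mat_def scalar_prod_def sum_indicator_mult)
qed

lemma selector_mult_transpose_selector:
  assumes "X \<subseteq> {0..<n}"
  shows "selector_mat n X * transpose_mat (selector_mat n X) =
    mat n n (\<lambda>(i, j). if i = j \<and> i \<in> X then 1 else 0)"
proof (rule eq_matI)
  have X: "finite X" using assms finite_subset by blast
  fix i j assume "i < dim_row (mat n n (\<lambda>(i, j). if i = j \<and> i \<in> X then 1 else (0::real)))"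
    "j < dim_col (mat n n (\<lambda>(i, j). if i = j \<and> i \<in> X then 1 else (0::real)))"
  then have ij: "i < n" "j < n" by auto
  define c where "c = card {a \<in> X. a < i}"
  have c: "i \<in> X \<Longrightarrow> c < card X"
    unfolding c_def using X by (intro psubset_card_mono) auto
  have pick_i: "k < card X \<Longrightarrow> i = pick X k \<longleftrightarrow> k = c \<and> i \<in> X" for k
    using pick_eq_iff[OF X, of k i] unfolding c_def by auto
  have "(selector_mat n X * transpose_mat (selector_mat n X)) $$ (i, j) =
      (\<Sum>k = 0..<card X. (if i = pick X k then 1 else 0) * (if j = pick X k then 1 else 0))"
    using ij by (simp add: selector_mat_def scalar_prod_def)
  also have "\<dots> = (\<Sum>k = 0..<card X. (if k = c then 1 else 0) * (if i \<in> X \<and> j = pick X k then 1 else 0))"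
    using pick_i by (intro sum.cong) auto
  also have "\<dots> = (if i = j \<and> i \<in> X then 1 else 0)"
    using c pick_card_in_set[of i X] unfolding c_def sum_indicator_mult by auto
  finally show "(selector_mat n X * transpose_mat (selector_mat n X)) $$ (i, j) =
    mat n n (\<lambda>(i, j). if i = j \<and> i \<in> X then 1 else 0) $$ (i, j)"
    using ij by simp
qed auto

lemma transpose_selector_mult_vec_self:
  assumes "X \<subseteq> {0..<n}" "x \<in> carrier_vec (card X)"
  shows "transpose_mat (selector_mat n X) *\<^sub>v (selector_mat n X *\<^sub>v x) = x"
proof -
  have "transpose_mat (selector_mat n X) *\<^sub>v (selector_mat n X *\<^sub>v x) =
      (transpose_mat (selector_mat n X) * selector_mat n X) *\<^sub>v x"
    using assms by (intro assoc_mult_mat_vec[symmetric]) auto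
  then show ?thesis using assms by (simp add: transpose_selector_mult_self)
qed

lemma transpose_selector_mult_vec_disjoint:
  assumes "X \<subseteq> {0..<n}" "X \<inter> Y = {}" "y \<in> carrier_vec (card Y)"
  shows "transpose_mat (selector_mat n X) *\<^sub>v (selector_mat n Y *\<^sub>v y) = 0\<^sub>v (card X)"
proof -
  have "transpose_mat (selector_mat n X) *\<^sub>v (selector_mat n Y *\<^sub>v y) =
      (transpose_mat (selector_mat n X) * selector_mat n Y) *\<^sub>v y"
    using assms by (intro assoc_mult_mat_vec[symmetric]) auto
  then show ?thesis using assms by (auto simp: transpose_selector_mult_disjoint)
qed

lemma transpose_selector_mult_vec_add:
  assumes "u \<in> carrier_vec n" "w \<in> carrier_vec n"
  shows "transpose_mat (selector_mat n X) *\<^sub>v (u + w) =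
    transpose_mat (selector_mat n X) *\<^sub>v u + transpose_mat (selector_mat n X) *\<^sub>v w"
  using assms by (intro mult_add_distrib_mat_vec[of _ "card X" n]) auto

section \<open>Quadratic forms and positive definiteness\<close>

lemma mult_mat_vec_zero: "dim_col A = n \<Longrightarrow> A *\<^sub>v 0\<^sub>v n = (0\<^sub>v (dim_row A) :: 'a :: semiring_0 vec)"
  by (intro eq_vecI) (auto simp: scalar_prod_def)

lemma scalar_prod_mult_transpose:
  fixes K :: "real mat"
  assumes "K \<in> carrier_mat r s" "x \<in> carrier_vec r" "y \<in> carrier_vec s"
  shows "x \<bullet> (K *\<^sub>v y) = y \<bullet> (transpose_mat K *\<^sub>v x)"
  using transpose_vec_mult_scalar[OF assms(1,3,2)] comm_scalar_prod[of y s] assms by simp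

lemma scalar_prod_congruence:
  fixes M :: "real mat"
  assumes "S \<in> carrier_mat n k" "M \<in> carrier_mat n n" "S' \<in> carrier_mat n l"
    and "x \<in> carrier_vec k" "y \<in> carrier_vec l"
  shows "x \<bullet> ((transpose_mat S * M * S') *\<^sub>v y) = (S *\<^sub>v x) \<bullet> (M *\<^sub>v (S' *\<^sub>v y))"
proof -
  have "(transpose_mat S * M * S') *\<^sub>v y = (transpose_mat S * M) *\<^sub>v (S' *\<^sub>v y)"
    using assms by (intro assoc_mult_mat_vec) auto
  also have "\<dots> = transpose_mat S *\<^sub>v (M *\<^sub>v (S' *\<^sub>v y))"
    using assms by (intro assoc_mult_mat_vec) auto
  finally have "(transpose_mat S * M * S') *\<^sub>v y = transpose_mat S *\<^sub>v (M *\<^sub>v (S' *\<^sub>v y))" .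
  then show ?thesis
    using assms scalar_prod_mult_transpose[of "transpose_mat S" k n x]
      comm_scalar_prod[of "S *\<^sub>v x" n] by simp
qed

lemma quad_form_add:
  fixes M :: "real mat"
  assumes "M \<in> carrier_mat n n" "transpose_mat M = M" "u \<in> carrier_vec n" "w \<in> carrier_vec n"
  shows "(u + w) \<bullet> (M *\<^sub>v (u + w)) = u \<bullet> (M *\<^sub>v u) + 2 * (u \<bullet> (M *\<^sub>v w)) + w \<bullet> (M *\<^sub>v w)"
proof -
  have "w \<bullet> (M *\<^sub>v u) = u \<bullet> (M *\<^sub>v w)"
    using scalar_prod_mult_transpose[OF assms(1,4,3)] assms(2) by simp
  then show ?thesis
    using assms by (simp add: mult_add_distrib_mat_vec add_scalar_prod_distrib[of _ n]
      scalar_prod_add_distrib[of _ n])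
qed

lemma quad_form_add3:
  fixes M :: "real mat"
  assumes M: "M \<in> carrier_mat n n" "transpose_mat M = M"
    and u: "u \<in> carrier_vec n" "v \<in> carrier_vec n" "w \<in> carrier_vec n"
  shows "(u + v + w) \<bullet> (M *\<^sub>v (u + v + w)) =
    u \<bullet> (M *\<^sub>v u) + v \<bullet> (M *\<^sub>v v) + w \<bullet> (M *\<^sub>v w)
    + 2 * (u \<bullet> (M *\<^sub>v v)) + 2 * (u \<bullet> (M *\<^sub>v w)) + 2 * (v \<bullet> (M *\<^sub>v w))"
proof -
  have "(u + v) \<bullet> (M *\<^sub>v w) = u \<bullet> (M *\<^sub>v w) + v \<bullet> (M *\<^sub>v w)"
    using M u by (intro add_scalar_prod_distrib) auto
  then show ?thesis
    using quad_form_add[OF M add_carrier_vec[OF u(1,2)] u(3)] quad_form_add[OF M u(1,2)] by simp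
qed

lemma quad_form_mat_add:
  fixes P Q :: "real mat"
  assumes "P \<in> carrier_mat m m" "Q \<in> carrier_mat m m" "x \<in> carrier_vec m"
  shows "x \<bullet> ((P + Q) *\<^sub>v x) = x \<bullet> (P *\<^sub>v x) + x \<bullet> (Q *\<^sub>v x)"
  using assms by (simp add: add_mult_distrib_mat_vec scalar_prod_add_distrib[of _ m])

lemma quad_form_mat_minus:
  fixes P Q :: "real mat"
  assumes "P \<in> carrier_mat m m" "Q \<in> carrier_mat m m" "x \<in> carrier_vec m"
  shows "x \<bullet> ((P - Q) *\<^sub>v x) = x \<bullet> (P *\<^sub>v x) - x \<bullet> (Q *\<^sub>v x)"
  using assms by (simp add: minus_mult_distrib_mat_vec scalar_prod_minus_distrib[of _ m])

lemma transpose_congruence: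
  fixes P :: "real mat"
  assumes "S \<in> carrier_mat n k" "P \<in> carrier_mat n n" "transpose_mat P = P"
  shows "transpose_mat (transpose_mat S * P * S) = transpose_mat S * P * S"
proof -
  have "transpose_mat (transpose_mat S * P * S) = transpose_mat S * transpose_mat (transpose_mat S * P)"
    using assms by (intro transpose_mult[of _ k n]) auto
  also have "transpose_mat (transpose_mat S * P) = P * S"
    using assms transpose_mult[of "transpose_mat S" k n P n] by simp
  finally show ?thesis using assms by (simp add: assoc_mult_mat[of _ k n _ n _ k])
qed

lemma pos_defI:
  fixes P :: "real mat"
  assumes "P \<in> carrier_mat m m" "transpose_mat P = P"
    and "\<And>x. x \<in> carrier_vec m \<Longrightarrow> x \<noteq> 0\<^sub>v m \<Longrightarrow> x \<bullet> (P *\<^sub>v x) > 0"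
  shows "pos_def P"
  using assms unfolding pos_def_def by auto

lemma pos_def_symmetric: "pos_def P \<Longrightarrow> transpose_mat P = P"
  unfolding pos_def_def by blast

lemma pos_def_quad_form_pos:
  assumes "pos_def P" "P \<in> carrier_mat m m" "x \<in> carrier_vec m" "x \<noteq> 0\<^sub>v m"
  shows "x \<bullet> (P *\<^sub>v x) > 0"
  using assms unfolding pos_def_def by auto

lemma pos_def_quad_form_nonneg:
  assumes "pos_def P" "P \<in> carrier_mat m m" "x \<in> carrier_vec m"
  shows "x \<bullet> (P *\<^sub>v x) \<ge> 0"
  using assms(2) pos_def_quad_form_pos[OF assms] by (cases "x = 0\<^sub>v m") auto

lemma pos_def_congruence:
  fixes P S :: "real mat"
  assumes P: "pos_def P" "P \<in> carrier_mat n n" and S: "S \<in> carrier_mat n k"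
    and inj: "\<And>x. x \<in> carrier_vec k \<Longrightarrow> S *\<^sub>v x = 0\<^sub>v n \<Longrightarrow> x = 0\<^sub>v k"
  shows "pos_def (transpose_mat S * P * S)"
proof (rule pos_defI)
  show "transpose_mat S * P * S \<in> carrier_mat k k" using P S by auto
  show "transpose_mat (transpose_mat S * P * S) = transpose_mat S * P * S"
    using transpose_congruence[OF S P(2) pos_def_symmetric[OF P(1)]] .
  fix x :: "real vec" assume "x \<in> carrier_vec k" "x \<noteq> 0\<^sub>v k"
  then show "x \<bullet> ((transpose_mat S * P * S) *\<^sub>v x) > 0"
    using P S inj pos_def_quad_form_pos[OF P, of "S *\<^sub>v x"] scalar_prod_congruence[OF S P(2) S]
    by fastforce
qed

lemma pos_def_submatrix:
  assumes "pos_def M" "M \<in> carrier_mat n n" "X \<subseteq> {0..<n}"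
  shows "pos_def (submatrix M X X)"
  unfolding submatrix_eq_selector_congruence[OF assms(2,3,3)]
proof (rule pos_def_congruence[OF assms(1,2) selector_mat_carrier])
  fix x :: "real vec" assume x: "x \<in> carrier_vec (card X)" "selector_mat n X *\<^sub>v x = 0\<^sub>v n"
  then have "x = transpose_mat (selector_mat n X) *\<^sub>v 0\<^sub>v n"
    using transpose_selector_mult_vec_self[OF assms(3) x(1)] by simp
  then show "x = 0\<^sub>v (card X)" by auto
qed

lemma pos_def_mat_inv:
  fixes P :: "real mat"
  assumes P: "pos_def P" "P \<in> carrier_mat m m"
  shows "mat_inv P \<in> carrier_mat m m" "P * mat_inv P = 1\<^sub>m m" "transpose_mat (mat_inv P) = mat_inv P"
proof -
  have "det P \<noteq> 0"
  proof
    assume "det P = 0"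
    then obtain v where "v \<in> carrier_vec m" "v \<noteq> 0\<^sub>v m" "P *\<^sub>v v = 0\<^sub>v m"
      using det_0_iff_vec_prod_zero[OF P(2)] by blast
    then show False using pos_def_quad_form_pos[OF P, of v] by simp
  qed
  then have "P \<in> Units (ring_mat TYPE(real) m undefined)"
    by (rule det_non_zero_imp_unit[OF P(2)])
  then obtain Q where "mat_inverse P = Some Q"
    using mat_inverse(1)[OF P(2)] by fastforce
  then have Q: "mat_inv P = Q" "P * Q = 1\<^sub>m m" "Q \<in> carrier_mat m m"
    using mat_inverse(2)[OF P(2)] unfolding mat_inv_def by auto
  have "transpose_mat Q * P = 1\<^sub>m m"
    using transpose_mult[OF P(2) Q(3)] Q(2) pos_def_symmetric[OF P(1)] by simp
  then have "transpose_mat Q = Q"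
    using assoc_mult_mat[of "transpose_mat Q" m m P m Q m] Q P(2) by simp
  then show "mat_inv P \<in> carrier_mat m m" "P * mat_inv P = 1\<^sub>m m" "transpose_mat (mat_inv P) = mat_inv P"
    using Q by simp_all
qed

lemma quad_form_complete_square:
  fixes P Q K :: "real mat"
  assumes P: "P \<in> carrier_mat a a" "transpose_mat P = P"
    and Q: "Q \<in> carrier_mat a a" "P * Q = 1\<^sub>m a" "transpose_mat Q = Q"
    and K: "K \<in> carrier_mat a c" and x: "x \<in> carrier_vec a" and z: "z \<in> carrier_vec c"
  shows "(x + Q *\<^sub>v (K *\<^sub>v z)) \<bullet> (P *\<^sub>v (x + Q *\<^sub>v (K *\<^sub>v z))) =
    x \<bullet> (P *\<^sub>v x) + 2 * (x \<bullet> (K *\<^sub>v z)) + z \<bullet> ((transpose_mat K * Q * K) *\<^sub>v z)"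
proof -
  define y where "y = Q *\<^sub>v (K *\<^sub>v z)"
  have y: "y \<in> carrier_vec a" unfolding y_def using Q K z by simp
  have "P *\<^sub>v y = (P * Q) *\<^sub>v (K *\<^sub>v z)"
    unfolding y_def using P Q K z by (intro assoc_mult_mat_vec[symmetric]) auto
  then have Py: "P *\<^sub>v y = K *\<^sub>v z" using Q(2) K z by simp
  have "y \<bullet> (K *\<^sub>v z) = z \<bullet> ((transpose_mat K * Q * K) *\<^sub>v z)"
    using scalar_prod_congruence[OF K Q(1) K z z] comm_scalar_prod[of "K *\<^sub>v z" a] Q K z
    unfolding y_def by simp
  then show ?thesis
    using quad_form_add[OF P x y] Py unfolding y_def by simp
qed

lemma quad_form_four_block_mat:
  fixes P K R :: "real mat"
  assumes "P \<in> carrier_mat a a" "K \<in> carrier_mat a c" "R \<in> carrier_mat c c"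
    and "x \<in> carrier_vec a" "z \<in> carrier_vec c"
  shows "(x @\<^sub>v z) \<bullet> (four_block_mat P K (transpose_mat K) R *\<^sub>v (x @\<^sub>v z)) =
    x \<bullet> (P *\<^sub>v x) + 2 * (x \<bullet> (K *\<^sub>v z)) + z \<bullet> (R *\<^sub>v z)"
proof -
  have "z \<bullet> (transpose_mat K *\<^sub>v x) = x \<bullet> (K *\<^sub>v z)"
    using scalar_prod_mult_transpose[OF assms(2,4,5)] by simp
  then show ?thesis
    using assms by (simp add: four_block_mat_mult_vec[of _ a a _ c _ c] scalar_prod_append[of _ a _ c]
      scalar_prod_add_distrib[of _ a] scalar_prod_add_distrib[of _ c])
qed

lemma append_vec_eq_zero_iff:
  assumes "x \<in> carrier_vec a" "z \<in> carrier_vec c"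
  shows "x @\<^sub>v z = 0\<^sub>v (a + c) \<longleftrightarrow> x = 0\<^sub>v a \<and> z = (0\<^sub>v c :: 'a :: zero vec)"
proof -
  have "0\<^sub>v (a + c) = 0\<^sub>v a @\<^sub>v (0\<^sub>v c :: 'a vec)" by (intro eq_vecI) auto
  then show ?thesis using append_vec_eq[OF assms(1), of "0\<^sub>v a" z "0\<^sub>v c"] by simp
qed

lemma pos_def_four_block_mat_diag:
  fixes P K R :: "real mat"
  assumes F: "pos_def (four_block_mat P K (transpose_mat K) R)"
    and P: "P \<in> carrier_mat a a" "transpose_mat P = P"
    and K: "K \<in> carrier_mat a c"
    and R: "R \<in> carrier_mat c c" "transpose_mat R = R"
  shows "pos_def P" "pos_def R"
proof -
  have F': "pos_def (four_block_mat P K (transpose_mat K) R)"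
    "four_block_mat P K (transpose_mat K) R \<in> carrier_mat (a + c) (a + c)"
    using F P K R by auto
  show "pos_def P"
  proof (rule pos_defI[OF P])
    fix x :: "real vec" assume "x \<in> carrier_vec a" "x \<noteq> 0\<^sub>v a"
    moreover have "K *\<^sub>v 0\<^sub>v c = 0\<^sub>v a" using K by auto
    ultimately show "x \<bullet> (P *\<^sub>v x) > 0"
      using pos_def_quad_form_pos[OF F', of "x @\<^sub>v 0\<^sub>v c"] quad_form_four_block_mat[OF P(1) K R(1), of x "0\<^sub>v c"]
        append_vec_eq_zero_iff[of x a "0\<^sub>v c" c] K R by auto
  qed
  show "pos_def R"
  proof (rule pos_defI[OF R])
    fix z :: "real vec" assume "z \<in> carrier_vec c" "z \<noteq> 0\<^sub>v c"
    then show "z \<bullet> (R *\<^sub>v z) > 0"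
      using pos_def_quad_form_pos[OF F', of "0\<^sub>v a @\<^sub>v z"] quad_form_four_block_mat[OF P(1) K R(1), of "0\<^sub>v a" z]
        append_vec_eq_zero_iff[of "0\<^sub>v a" a z c] K P by auto
  qed
qed

lemma submatrix_carrier_mat:
  assumes "M \<in> carrier_mat n n" "X \<subseteq> {0..<n}" "Y \<subseteq> {0..<n}"
  shows "submatrix M X Y \<in> carrier_mat (card X) (card Y)"
proof -
  have "{i. i < n \<and> i \<in> X} = X" "{i. i < n \<and> i \<in> Y} = Y" using assms by auto
  then show ?thesis using assms(1) by (intro carrier_matI) (simp_all add: dim_submatrix)
qed

lemma transpose_submatrix:
  fixes M :: "real mat"
  assumes "M \<in> carrier_mat n n" "transpose_mat M = M" "X \<subseteq> {0..<n}" "Y \<subseteq> {0..<n}"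
  shows "transpose_mat (submatrix M X Y) = submatrix M Y X"
proof -
  let ?SX = "selector_mat n X" and ?SY = "selector_mat n Y"
  have "transpose_mat (transpose_mat ?SX * M * ?SY) = transpose_mat ?SY * transpose_mat (transpose_mat ?SX * M)"
    using assms by (intro transpose_mult[of _ _ n]) auto
  also have "transpose_mat (transpose_mat ?SX * M) = transpose_mat M * transpose_mat (transpose_mat ?SX)"
    using assms by (intro transpose_mult[of _ "card X" n]) auto
  also have "\<dots> = M * ?SX"
    using assms(2) by simp
  also have "transpose_mat ?SY * (M * ?SX) = transpose_mat ?SY * M * ?SX"
    using assms by (intro assoc_mult_mat[symmetric, of _ _ n _ n]) auto
  finally show ?thesis
    unfolding submatrix_eq_selector_congruence[OF assms(1,3,4)] submatrix_eq_selector_congruence[OF assms(1,4,3)] .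
qed

lemma scalar_prod_submatrix:
  assumes "M \<in> carrier_mat n n" "X \<subseteq> {0..<n}" "Y \<subseteq> {0..<n}"
    and "x \<in> carrier_vec (card X)" "y \<in> carrier_vec (card Y)"
  shows "x \<bullet> (submatrix M X Y *\<^sub>v y) =
    (selector_mat n X *\<^sub>v x) \<bullet> (M *\<^sub>v (selector_mat n Y *\<^sub>v y))"
  using scalar_prod_congruence[OF selector_mat_carrier assms(1) selector_mat_carrier assms(4,5)]
  unfolding submatrix_eq_selector_congruence[OF assms(1-3)] .

lemma selector_mult_vec_add_eq_zero_iff:
  assumes X: "X \<subseteq> {0..<n}" and Y: "Y \<subseteq> {0..<n}" and XY: "X \<inter> Y = {}"
    and x: "x \<in> carrier_vec (card X)" and y: "y \<in> carrier_vec (card Y)"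
  shows "selector_mat n X *\<^sub>v x + selector_mat n Y *\<^sub>v y = 0\<^sub>v n \<longleftrightarrow>
    x = 0\<^sub>v (card X) \<and> y = 0\<^sub>v (card Y)"
proof
  let ?u = "selector_mat n X *\<^sub>v x + selector_mat n Y *\<^sub>v y"
  have "transpose_mat (selector_mat n X) *\<^sub>v ?u = x" "transpose_mat (selector_mat n Y) *\<^sub>v ?u = y"
    using XY X Y x y by (simp_all add: transpose_selector_mult_vec_add transpose_selector_mult_vec_self
      transpose_selector_mult_vec_disjoint Int_commute)
  moreover assume "?u = 0\<^sub>v n"
  ultimately show "x = 0\<^sub>v (card X) \<and> y = 0\<^sub>v (card Y)" by (auto simp: mult_mat_vec_zero)
qed (auto simp: mult_mat_vec_zero)

lemma pos_def_four_block_submatrix: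
  assumes pdM: "pos_def M" and M: "M \<in> carrier_mat n n"
    and X: "X \<subseteq> {0..<n}" and Y: "Y \<subseteq> {0..<n}" and XY: "X \<inter> Y = {}"
  shows "pos_def (four_block_mat (submatrix M X X) (submatrix M X Y) (submatrix M Y X) (submatrix M Y Y))"
proof -
  have MT: "transpose_mat M = M" using pos_def_symmetric[OF pdM] .
  note carriers = submatrix_carrier_mat[OF M X X] submatrix_carrier_mat[OF M X Y]
    submatrix_carrier_mat[OF M Y Y]
  let ?F = "four_block_mat (submatrix M X X) (submatrix M X Y) (transpose_mat (submatrix M X Y))
    (submatrix M Y Y)"
  have "pos_def ?F"
  proof (rule pos_defI)
    show "?F \<in> carrier_mat (card X + card Y) (card X + card Y)"
      using carriers by (intro four_block_carrier_mat) auto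
    show "transpose_mat ?F = ?F"
      using carriers submatrix_carrier_mat[OF M Y X] transpose_submatrix[OF M MT] X Y
      by (simp add: transpose_four_block_mat)
    fix v :: "real vec" assume v: "v \<in> carrier_vec (card X + card Y)" "v \<noteq> 0\<^sub>v (card X + card Y)"
    define x y where "x = vec_first v (card X)" and "y = vec_last v (card Y)"
    have xy: "x \<in> carrier_vec (card X)" "y \<in> carrier_vec (card Y)" "v = x @\<^sub>v y"
      unfolding x_def y_def using v by auto
    define u where "u = selector_mat n X *\<^sub>v x + selector_mat n Y *\<^sub>v y"
    have "u \<noteq> 0\<^sub>v n"
      unfolding u_def selector_mult_vec_add_eq_zero_iff[OF X Y XY xy(1,2)]
      using v xy append_vec_eq_zero_iff by auto
    then have "u \<bullet> (M *\<^sub>v u) > 0" using pos_def_quad_form_pos[OF pdM M] unfolding u_def by simp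
    moreover have "u \<bullet> (M *\<^sub>v u) = x \<bullet> (submatrix M X X *\<^sub>v x) + 2 * (x \<bullet> (submatrix M X Y *\<^sub>v y))
        + y \<bullet> (submatrix M Y Y *\<^sub>v y)"
      unfolding u_def using quad_form_add[OF M MT] scalar_prod_submatrix[OF M] X Y xy by simp
    ultimately show "v \<bullet> (?F *\<^sub>v v) > 0"
      using quad_form_four_block_mat carriers xy by simp
  qed
  then show ?thesis using transpose_submatrix[OF M MT X Y] by simp
qed

section \<open>Symmetric matrices with a vanishing off-diagonal block\<close>

definition schur_complement :: "real mat \<Rightarrow> nat set \<Rightarrow> nat set \<Rightarrow> real mat" where
  "schur_complement M X Y = sub M Y Y - sub M Y X * mat_inv (sub M X X) * sub M X Y"

locale separated_blocks =
  fixes n :: nat and M :: "real mat" and A B C :: "nat set"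
  assumes carrier: "M \<in> carrier_mat n n"
    and symmetric: "transpose_mat M = M"
    and disjoint: "A \<inter> B = {}" "A \<inter> C = {}" "B \<inter> C = {}"
    and cover: "A \<union> B \<union> C = {0..<n}"
    and separated: "sub M A B = 0\<^sub>m (card A) (card B)"
begin

lemma subsets: "A \<subseteq> {0..<n}" "B \<subseteq> {0..<n}" "C \<subseteq> {0..<n}"
  using cover by auto

lemma block_carrier [simp]:
  "X \<in> {A, B, C} \<Longrightarrow> Y \<in> {A, B, C} \<Longrightarrow> sub M X Y \<in> carrier_mat (card X) (card Y)"
  using submatrix_carrier_mat[OF carrier] subsets by auto

lemma transpose_block [simp]:
  "X \<in> {A, B, C} \<Longrightarrow> Y \<in> {A, B, C} \<Longrightarrow> transpose_mat (sub M X Y) = sub M Y X"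
  using transpose_submatrix[OF carrier symmetric] subsets by auto

lemma dim_block [simp]:
  "dim_row (sub M X Y) = card X" "dim_col (sub M X Y) = card Y" if "X \<in> {A, B, C}" "Y \<in> {A, B, C}"
  using block_carrier[OF that] by auto

definition block_vec :: "real vec \<Rightarrow> real vec \<Rightarrow> real vec \<Rightarrow> real vec" where
  "block_vec xa xb xc =
    selector_mat n A *\<^sub>v xa + selector_mat n B *\<^sub>v xb + selector_mat n C *\<^sub>v xc"

lemma block_vec_carrier [simp]: "block_vec xa xb xc \<in> carrier_vec n"
  unfolding block_vec_def by simp

lemma block_vec_decompose:
  assumes "v \<in> carrier_vec n"
  shows "v = block_vec (transpose_mat (selector_mat n A) *\<^sub>v v)
    (transpose_mat (selector_mat n B) *\<^sub>v v) (transpose_mat (selector_mat n C) *\<^sub>v v)"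
proof -
  let ?P = "\<lambda>X. selector_mat n X * transpose_mat (selector_mat n X)"
  have "?P A + ?P B + ?P C = 1\<^sub>m n"
    unfolding selector_mult_transpose_selector[OF subsets(1)] selector_mult_transpose_selector[OF subsets(2)]
      selector_mult_transpose_selector[OF subsets(3)]
    using disjoint cover by (intro eq_matI) auto
  then have "v = (?P A + ?P B + ?P C) *\<^sub>v v" using assms by simp
  also have "\<dots> = ?P A *\<^sub>v v + ?P B *\<^sub>v v + ?P C *\<^sub>v v"
  proof -
    have P: "?P X \<in> carrier_mat n n" for X by (intro mult_carrier_mat) auto
    have "(?P A + ?P B + ?P C) *\<^sub>v v = (?P A + ?P B) *\<^sub>v v + ?P C *\<^sub>v v"
      by (rule add_mult_distrib_mat_vec) (use P assms in auto)
    then show ?thesis using add_mult_distrib_mat_vec[OF P P assms] by simp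
  qed
  also have "\<dots> = block_vec (transpose_mat (selector_mat n A) *\<^sub>v v)
      (transpose_mat (selector_mat n B) *\<^sub>v v) (transpose_mat (selector_mat n C) *\<^sub>v v)"
  proof -
    have "?P X *\<^sub>v v = selector_mat n X *\<^sub>v (transpose_mat (selector_mat n X) *\<^sub>v v)" for X
      by (rule assoc_mult_mat_vec) (use assms in auto)
    then show ?thesis unfolding block_vec_def by simp
  qed
  finally show ?thesis .
qed

lemma block_vec_coordinates:
  assumes "xa \<in> carrier_vec (card A)" "xb \<in> carrier_vec (card B)" "xc \<in> carrier_vec (card C)"
  shows "transpose_mat (selector_mat n A) *\<^sub>v block_vec xa xb xc = xa"
    "transpose_mat (selector_mat n B) *\<^sub>v block_vec xa xb xc = xb"
    "transpose_mat (selector_mat n C) *\<^sub>v block_vec xa xb xc = xc"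
proof -
  have distrib: "transpose_mat (selector_mat n X) *\<^sub>v block_vec xa xb xc =
      transpose_mat (selector_mat n X) *\<^sub>v (selector_mat n A *\<^sub>v xa) +
      transpose_mat (selector_mat n X) *\<^sub>v (selector_mat n B *\<^sub>v xb) +
      transpose_mat (selector_mat n X) *\<^sub>v (selector_mat n C *\<^sub>v xc)" for X
    unfolding block_vec_def by (simp add: transpose_selector_mult_vec_add)
  have disjoint': "B \<inter> A = {}" "C \<inter> A = {}" "C \<inter> B = {}" using disjoint by auto
  show "transpose_mat (selector_mat n A) *\<^sub>v block_vec xa xb xc = xa"
    "transpose_mat (selector_mat n B) *\<^sub>v block_vec xa xb xc = xb"
    "transpose_mat (selector_mat n C) *\<^sub>v block_vec xa xb xc = xc"
    unfolding distrib using assms subsets disjoint disjoint'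
    by (simp_all add: transpose_selector_mult_vec_self transpose_selector_mult_vec_disjoint)
qed

lemma block_vec_eq_zero_iff:
  assumes "xa \<in> carrier_vec (card A)" "xb \<in> carrier_vec (card B)" "xc \<in> carrier_vec (card C)"
  shows "block_vec xa xb xc = 0\<^sub>v n \<longleftrightarrow> xa = 0\<^sub>v (card A) \<and> xb = 0\<^sub>v (card B) \<and> xc = 0\<^sub>v (card C)"
proof
  assume "block_vec xa xb xc = 0\<^sub>v n"
  then show "xa = 0\<^sub>v (card A) \<and> xb = 0\<^sub>v (card B) \<and> xc = 0\<^sub>v (card C)"
    using block_vec_coordinates[OF assms] by auto
qed (auto simp: block_vec_def)

lemma quad_form_block_vec:
  assumes xa: "xa \<in> carrier_vec (card A)" and xb: "xb \<in> carrier_vec (card B)"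
    and xc: "xc \<in> carrier_vec (card C)"
  shows "block_vec xa xb xc \<bullet> (M *\<^sub>v block_vec xa xb xc) =
    xa \<bullet> (sub M A A *\<^sub>v xa) + xb \<bullet> (sub M B B *\<^sub>v xb) + xc \<bullet> (sub M C C *\<^sub>v xc)
    + 2 * (xa \<bullet> (sub M A C *\<^sub>v xc)) + 2 * (xb \<bullet> (sub M B C *\<^sub>v xc))"
proof -
  note block_form = scalar_prod_submatrix[OF carrier, symmetric]
  have "sub M A B *\<^sub>v xb = 0\<^sub>v (card A)" using separated xb by auto
  then have "xa \<bullet> (sub M A B *\<^sub>v xb) = 0" using xa by simp
  then show ?thesis
    unfolding block_vec_def quad_form_add3[OF carrier symmetric selector_mult_vec_carrier(1)
      selector_mult_vec_carrier(1) selector_mult_vec_carrier(1)]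
    using block_form[OF subsets(1,1) xa xa] block_form[OF subsets(2,2) xb xb]
      block_form[OF subsets(3,3) xc xc] block_form[OF subsets(1,3) xa xc]
      block_form[OF subsets(2,3) xb xc] block_form[OF subsets(1,2) xa xb] by simp
qed

lemma schur_complement_carrier [simp]:
  "schur_complement M X Y \<in> carrier_mat (card Y) (card Y)" if "X \<in> {A, B, C}" "Y \<in> {A, B, C}"
  using that unfolding schur_complement_def by (intro carrier_matI) auto

lemma transpose_schur_complement:
  assumes "X \<in> {A, B, C}" "Y \<in> {A, B, C}" "pos_def (sub M X X)"
  shows "transpose_mat (schur_complement M X Y) = schur_complement M X Y"
proof -
  note inv = pos_def_mat_inv[OF assms(3) block_carrier[OF assms(1,1)]]
  have "transpose_mat (transpose_mat (sub M X Y) * mat_inv (sub M X X) * sub M X Y) =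
      transpose_mat (sub M X Y) * mat_inv (sub M X X) * sub M X Y"
    using assms inv by (intro transpose_congruence[of _ "card X" "card Y"]) auto
  moreover have eq: "schur_complement M X Y =
      sub M Y Y - transpose_mat (sub M X Y) * mat_inv (sub M X X) * sub M X Y"
    unfolding schur_complement_def using assms by simp
  ultimately show ?thesis
    unfolding eq using assms inv by (subst transpose_minus[of _ "card Y" "card Y"]) auto
qed

lemma mat_inv_block_carrier [simp]:
  "pos_def (sub M X X) \<Longrightarrow> X \<in> {A, B, C} \<Longrightarrow> mat_inv (sub M X X) \<in> carrier_mat (card X) (card X)"
  using pos_def_mat_inv(1) block_carrier by blast

lemma quad_form_schur_complement:
  assumes "X \<in> {A, B, C}" "Y \<in> {A, B, C}" "y \<in> carrier_vec (card Y)"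
  shows "y \<bullet> (schur_complement M X Y *\<^sub>v y) =
    y \<bullet> (sub M Y Y *\<^sub>v y) - y \<bullet> ((sub M Y X * mat_inv (sub M X X) * sub M X Y) *\<^sub>v y)"
proof -
  have "sub M Y X * mat_inv (sub M X X) * sub M X Y \<in> carrier_mat (card Y) (card Y)"
    using assms by (intro carrier_matI) auto
  then show ?thesis
    unfolding schur_complement_def using assms by (intro quad_form_mat_minus) auto
qed

lemma quad_form_block_vec_complete_square:
  assumes pdA: "pos_def (sub M A A)" and pdB: "pos_def (sub M B B)"
    and xa: "xa \<in> carrier_vec (card A)" and xb: "xb \<in> carrier_vec (card B)"
    and xc: "xc \<in> carrier_vec (card C)"
  defines "ya \<equiv> xa + mat_inv (sub M A A) *\<^sub>v (sub M A C *\<^sub>v xc)"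
    and "yb \<equiv> xb + mat_inv (sub M B B) *\<^sub>v (sub M B C *\<^sub>v xc)"
  shows "block_vec xa xb xc \<bullet> (M *\<^sub>v block_vec xa xb xc) =
    ya \<bullet> (sub M A A *\<^sub>v ya) + yb \<bullet> (sub M B B *\<^sub>v yb) +
    xc \<bullet> ((schur_complement M A C + schur_complement M B C - sub M C C) *\<^sub>v xc)"
proof -
  note invA = pos_def_mat_inv[OF pdA block_carrier, simplified]
  note invB = pos_def_mat_inv[OF pdB block_carrier, simplified]
  have transpose_CA: "transpose_mat (sub M A C) = sub M C A"
    and transpose_CB: "transpose_mat (sub M B C) = sub M C B" by simp_all
  have "ya \<bullet> (sub M A A *\<^sub>v ya) = xa \<bullet> (sub M A A *\<^sub>v xa) + 2 * (xa \<bullet> (sub M A C *\<^sub>v xc))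
      + xc \<bullet> ((sub M C A * mat_inv (sub M A A) * sub M A C) *\<^sub>v xc)"
    unfolding ya_def transpose_CA[symmetric]
    by (rule quad_form_complete_square[OF _ _ invA]) (use xa xc in simp_all)
  moreover have "yb \<bullet> (sub M B B *\<^sub>v yb) = xb \<bullet> (sub M B B *\<^sub>v xb) + 2 * (xb \<bullet> (sub M B C *\<^sub>v xc))
      + xc \<bullet> ((sub M C B * mat_inv (sub M B B) * sub M B C) *\<^sub>v xc)"
    unfolding yb_def transpose_CB[symmetric]
    by (rule quad_form_complete_square[OF _ _ invB]) (use xb xc in simp_all)
  moreover have "xc \<bullet> ((schur_complement M A C + schur_complement M B C - sub M C C) *\<^sub>v xc) =
      xc \<bullet> (schur_complement M A C *\<^sub>v xc) + xc \<bullet> (schur_complement M B C *\<^sub>v xc)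
      - xc \<bullet> (sub M C C *\<^sub>v xc)"
  proof -
    have S: "schur_complement M A C \<in> carrier_mat (card C) (card C)"
      "schur_complement M B C \<in> carrier_mat (card C) (card C)" "sub M C C \<in> carrier_mat (card C) (card C)"
      by simp_all
    show ?thesis
      using quad_form_mat_minus[OF add_carrier_mat[OF S(2)] S(3) xc] quad_form_mat_add[OF S(1,2) xc] by simp
  qed
  ultimately show ?thesis
    using quad_form_block_vec[OF xa xb xc] quad_form_schur_complement xc by simp
qed

lemma schur_complement_sum_carrier:
  "schur_complement M A C + schur_complement M B C - sub M C C \<in> carrier_mat (card C) (card C)"
  by (intro carrier_matI) simp_all

lemma pos_def_schur_complement_sum:
  assumes pdM: "pos_def M"
  shows "pos_def (schur_complement M A C + schur_complement M B C - sub M C C)"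
    (is "pos_def ?T")
proof (rule pos_defI[OF schur_complement_sum_carrier])
  have pdA: "pos_def (sub M A A)" and pdB: "pos_def (sub M B B)"
    using pos_def_submatrix[OF pdM carrier] subsets by auto
  show "transpose_mat ?T = ?T"
    using transpose_schur_complement pdA pdB
    by (simp add: transpose_minus[of _ "card C" "card C"] transpose_add[of _ "card C" "card C"])
  fix xc :: "real vec" assume xc: "xc \<in> carrier_vec (card C)" "xc \<noteq> 0\<^sub>v (card C)"
  \<comment> \<open>For fixed \<open>x\<^sub>C\<close>, the form of \<open>M\<close> is minimal at \<open>x\<^sub>A = -z\<^sub>A\<close>, \<open>x\<^sub>B = -z\<^sub>B\<close>,
    where it equals the form of \<open>S\<^sub>1 + S\<^sub>2 - M\<^sub>C\<^sub>C\<close> at \<open>x\<^sub>C\<close>.\<close>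
  define za zb where "za = mat_inv (sub M A A) *\<^sub>v (sub M A C *\<^sub>v xc)"
    and "zb = mat_inv (sub M B B) *\<^sub>v (sub M B C *\<^sub>v xc)"
  have z: "za \<in> carrier_vec (card A)" "zb \<in> carrier_vec (card B)"
    unfolding za_def zb_def using pdA pdB xc by (auto intro!: mult_mat_vec_carrier)
  have "block_vec (- za) (- zb) xc \<bullet> (M *\<^sub>v block_vec (- za) (- zb) xc) = xc \<bullet> (?T *\<^sub>v xc)"
    using quad_form_block_vec_complete_square[OF pdA pdB _ _ xc(1), of "- za" "- zb"] z
    unfolding za_def[symmetric] zb_def[symmetric] by (simp add: mult_mat_vec_zero)
  moreover have "block_vec (- za) (- zb) xc \<noteq> 0\<^sub>v n"
    using block_vec_eq_zero_iff z xc by simp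
  ultimately show "xc \<bullet> (?T *\<^sub>v xc) > 0"
    using pos_def_quad_form_pos[OF pdM carrier block_vec_carrier, of "- za" "- zb" xc] by simp
qed

lemma pos_def_of_schur_complements:
  assumes pdA: "pos_def (sub M A A)" and pdB: "pos_def (sub M B B)"
    and pdT: "pos_def (schur_complement M A C + schur_complement M B C - sub M C C)"
      (is "pos_def ?T")
  shows "pos_def M"
proof (rule pos_defI[OF carrier symmetric])
  fix v :: "real vec" assume v: "v \<in> carrier_vec n" "v \<noteq> 0\<^sub>v n"
  define xa xb xc where "xa = transpose_mat (selector_mat n A) *\<^sub>v v"
    and "xb = transpose_mat (selector_mat n B) *\<^sub>v v" and "xc = transpose_mat (selector_mat n C) *\<^sub>v v"
  define ya yb where "ya = xa + mat_inv (sub M A A) *\<^sub>v (sub M A C *\<^sub>v xc)"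
    and "yb = xb + mat_inv (sub M B B) *\<^sub>v (sub M B C *\<^sub>v xc)"
  have x: "xa \<in> carrier_vec (card A)" "xb \<in> carrier_vec (card B)" "xc \<in> carrier_vec (card C)"
    unfolding xa_def xb_def xc_def by simp_all
  have y: "ya \<in> carrier_vec (card A)" "yb \<in> carrier_vec (card B)"
    unfolding ya_def yb_def using pdA pdB x by (auto intro!: add_carrier_vec mult_mat_vec_carrier)
  have v_eq: "v = block_vec xa xb xc"
    unfolding xa_def xb_def xc_def by (rule block_vec_decompose[OF v(1)])
  have quad: "v \<bullet> (M *\<^sub>v v) =
      ya \<bullet> (sub M A A *\<^sub>v ya) + yb \<bullet> (sub M B B *\<^sub>v yb) + xc \<bullet> (?T *\<^sub>v xc)"
    unfolding v_eq ya_def yb_def by (rule quad_form_block_vec_complete_square[OF pdA pdB x])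
  have nonneg: "ya \<bullet> (sub M A A *\<^sub>v ya) \<ge> 0" "yb \<bullet> (sub M B B *\<^sub>v yb) \<ge> 0"
      "xc \<bullet> (?T *\<^sub>v xc) \<ge> 0"
    using pos_def_quad_form_nonneg[OF pdA _ y(1)] pos_def_quad_form_nonneg[OF pdB _ y(2)]
      pos_def_quad_form_nonneg[OF pdT schur_complement_sum_carrier x(3)] by simp_all
  show "v \<bullet> (M *\<^sub>v v) > 0"
  proof (cases "xc = 0\<^sub>v (card C)")
    case True
    then have "ya = xa" "yb = xb"
      unfolding ya_def yb_def using x mat_inv_block_carrier[OF pdA] mat_inv_block_carrier[OF pdB]
      by (auto simp: mult_mat_vec_zero)
    moreover have "xa \<noteq> 0\<^sub>v (card A) \<or> xb \<noteq> 0\<^sub>v (card B)"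
      using v block_vec_eq_zero_iff[OF x] True v_eq by auto
    ultimately have "ya \<bullet> (sub M A A *\<^sub>v ya) > 0 \<or> yb \<bullet> (sub M B B *\<^sub>v yb) > 0"
      using pos_def_quad_form_pos[OF pdA _ x(1)] pos_def_quad_form_pos[OF pdB _ x(2)] by auto
    then show ?thesis using quad nonneg by linarith
  next
    case False
    then have "xc \<bullet> (?T *\<^sub>v xc) > 0"
      using pos_def_quad_form_pos[OF pdT schur_complement_sum_carrier x(3)] by blast
    then show ?thesis using quad nonneg by linarith
  qed
qed

theorem pos_def_iff_schur_complements:
  "pos_def M \<longleftrightarrow> pos_def (sub M A A) \<and> pos_def (sub M B B) \<and>
    pos_def (schur_complement M A C + schur_complement M B C - sub M C C)"
  using pos_def_submatrix[OF _ carrier] subsets pos_def_schur_complement_sum pos_def_of_schur_complements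
  by blast

theorem pos_def_iff_overlapping_blocks:
  "pos_def M \<longleftrightarrow>
    pos_def (four_block_mat (sub M A A) (sub M A C) (sub M C A) (sub M C C)) \<and>
    pos_def (four_block_mat (sub M C C) (sub M C B) (sub M B C) (sub M B B)) \<and>
    pos_def (schur_complement M A C + schur_complement M B C - sub M C C)"
proof -
  have "pos_def (sub M A A)" if "pos_def (four_block_mat (sub M A A) (sub M A C) (sub M C A) (sub M C C))"
    using pos_def_four_block_mat_diag(1)[of "sub M A A" "sub M A C" "sub M C C" "card A" "card C"] that by simp
  moreover have "pos_def (sub M B B)" if "pos_def (four_block_mat (sub M C C) (sub M C B) (sub M B C) (sub M B B))"
    using pos_def_four_block_mat_diag(2)[of "sub M C C" "sub M C B" "sub M B B" "card C" "card B"] that by simp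
  ultimately show ?thesis
    using pos_def_four_block_submatrix[OF _ carrier] subsets disjoint
      pos_def_iff_schur_complements by (metis Int_commute)
qed

end

section \<open>Graph-restricted matrices\<close>

lemma restrict_graph_carrier_mat: "N \<in> carrier_mat n n \<Longrightarrow> restrict_graph E N \<in> carrier_mat n n"
  unfolding restrict_graph_def by auto

lemma restrict_graph_symmetric:
  assumes "N \<in> carrier_mat n n" "transpose_mat N = N" "sym E"
  shows "transpose_mat (restrict_graph E N) = restrict_graph E N"
proof -
  have "N $$ (j, i) = N $$ (i, j)" if "i < n" "j < n" for i j
    using assms(1,2) that by (metis carrier_matD index_transpose_mat(1))
  then show ?thesis
    using assms unfolding restrict_graph_def by (intro eq_matI) (auto dest: symD)
qed

lemma separates_no_edge:
  assumes "separates E C A B" "i \<in> A" "j \<in> B" "i \<notin> C" "j \<notin> C" "i \<noteq> j"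
  shows "(i, j) \<notin> E"
proof
  assume "(i, j) \<in> E"
  then have "graph_walk E [i, j]" unfolding graph_walk_def by (auto simp: less_Suc_eq)
  then show False using assms unfolding separates_def by fastforce
qed

lemma submatrix_restrict_graph_separated:
  assumes N: "N \<in> carrier_mat n n" and sep: "separates E C A B"
    and disjoint: "A \<inter> B = {}" "A \<inter> C = {}" "B \<inter> C = {}"
    and subsets: "A \<subseteq> {0..<n}" "B \<subseteq> {0..<n}"
  shows "sub (restrict_graph E N) A B = 0\<^sub>m (card A) (card B)"
proof -
  let ?M = "restrict_graph E N"
  have M: "?M \<in> carrier_mat n n" using restrict_graph_carrier_mat[OF N] .
  have "{i. i < n \<and> i \<in> A} = A" "{i. i < n \<and> i \<in> B} = B" using subsets by auto
  then have entry: "sub ?M A B $$ (k, l) = ?M $$ (pick A k, pick B l)" if "k < card A" "l < card B" for k l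
    using M that by (intro submatrix_index) auto
  have "?M $$ (i, j) = 0" if "i \<in> A" "j \<in> B" for i j
  proof -
    have "i < n" "j < n" "i \<noteq> j" "i \<notin> C" "j \<notin> C" using that subsets disjoint by auto
    then show ?thesis using separates_no_edge[OF sep that] N unfolding restrict_graph_def by auto
  qed
  then show ?thesis
    using submatrix_carrier_mat[OF M subsets] entry pick_in_set[OF disjI1, of _ A] pick_in_set[OF disjI1, of _ B]
    by (intro eq_matI) auto
qed

theorem proposition2:
  fixes n :: nat and E :: "(nat \<times> nat) set" and A B C :: "nat set" and N :: "real mat"
  assumes graph: "E \<subseteq> {0..<n} \<times> {0..<n}" "sym E"
    and nonempty: "A \<noteq> {}" "B \<noteq> {}" "C \<noteq> {}"
    and disjoint: "A \<inter> B = {}" "A \<inter> C = {}" "B \<inter> C = {}"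
    and cover: "A \<union> B \<union> C = {0..<n}"
    and sep: "separates E C A B"
    and compl: "complete_in E C"
    and N: "N \<in> carrier_mat n n" "pos_def N"
  defines "M \<equiv> restrict_graph E N"
  defines "S1 \<equiv> sub M C C - sub M C A * mat_inv (sub M A A) * sub M A C"
      and "S2 \<equiv> sub M C C - sub M C B * mat_inv (sub M B B) * sub M B C"
  shows "(pos_def M \<longleftrightarrow>
            pos_def (four_block_mat (sub M A A) (sub M A C) (sub M C A) (sub M C C)) \<and>
            pos_def (four_block_mat (sub M C C) (sub M C B) (sub M B C) (sub M B B)) \<and>
            pos_def (S1 + S2 - sub M C C))
       \<and> (pos_def M \<longleftrightarrow>
            pos_def (sub M A A) \<and> pos_def (sub M B B) \<and> pos_def (S1 + S2 - sub M C C))"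
proof -
  interpret separated_blocks n M A B C
  proof
    show "M \<in> carrier_mat n n"
      unfolding M_def by (rule restrict_graph_carrier_mat[OF N(1)])
    show "transpose_mat M = M"
      unfolding M_def by (rule restrict_graph_symmetric[OF N(1) pos_def_symmetric[OF N(2)] graph(2)])
    show "sub M A B = 0\<^sub>m (card A) (card B)"
      unfolding M_def using submatrix_restrict_graph_separated[OF N(1) sep disjoint] cover by auto
  qed (use disjoint cover in auto)
  have "S1 = schur_complement M A C" "S2 = schur_complement M B C"
    unfolding S1_def S2_def schur_complement_def by simp_all
  then show ?thesis
    using pos_def_iff_overlapping_blocks pos_def_iff_schur_complements by simp
qed

end
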